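(* Fix $\delta>0$ and any sequence $(T_N)_N$ with $T_N\in2\mathbb N$. For every $\varepsilon>0$ there exists $\ell_0=\ell_0(\varepsilon)\in\mathbb N$ such that for every $N\in\mathbb N$, $$\mathbf P^{T_N}_{N,\delta}(\mu_N<N-\ell_0)=\sum_{\ell=\ell_0+1}^{N}\mathbf P^{T_N}_{N,\delta}(\mu_N=N-\ell)\le\varepsilon,$$ where $\mu_N:=\max\{0\le n\le N: S_n\in T_N\mathbb Z\}$.
   Context: $(S_n)_{n\ge0}$ is the simple symmetric random walk on $\mathbb Z$ started at $0$, with law $\mathbf P$. For $T\in2\mathbb N$, $N\in\mathbb N$, $\delta\in\mathbb R$, the polymer measure $\mathbf P^T_{N,\delta}$ is defined by $\frac{d\mathbf P^T_{N,\delta}}{d\mathbf P}(S)=\frac{\exp(\delta\sum_{i=1}^N\mathbf 1_{\{S_i\in T\mathbb Z\}})}{Z^T_{N,\delta}}$, with $Z^T_{N,\delta}$ the normalizing constant. *)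

theory Defs
  imports Complex_Main
begin

text \<open>Simple random walk paths up to time N are encoded by their increment lists
  xs \<in> {-1,1}^N; under the SRW law P each such list has probability 2^(-N).
  All events considered depend only on S_0,...,S_N, so the polymer measure
  P^T_{N,delta} is represented by its (exact) marginal on these increment lists.\<close>

definition paths :: "nat \<Rightarrow> int list set" where
  "paths N = {xs. length xs = N \<and> set xs \<subseteq> {-1, 1}}"

definition walk :: "int list \<Rightarrow> nat \<Rightarrow> int" where
  "walk xs n = sum_list (take n xs)"

definition visits :: "int \<Rightarrow> nat \<Rightarrow> int list \<Rightarrow> nat" where
  "visits T N xs = card {i \<in> {1..N}. T dvd walk xs i}"

definition weight :: "int \<Rightarrow> nat \<Rightarrow> real \<Rightarrow> int list \<Rightarrow> real" where
  "weight T N \<delta> xs = exp (\<delta> * real (visits T N xs))"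

definition Zpol :: "int \<Rightarrow> nat \<Rightarrow> real \<Rightarrow> real" where
  "Zpol T N \<delta> = (\<Sum>xs\<in>paths N. weight T N \<delta> xs / 2 ^ N)"

definition Ppol :: "int \<Rightarrow> nat \<Rightarrow> real \<Rightarrow> (int list \<Rightarrow> bool) \<Rightarrow> real" where
  "Ppol T N \<delta> A = (\<Sum>xs\<in>{xs\<in>paths N. A xs}. weight T N \<delta> xs / 2 ^ N) / Zpol T N \<delta>"

definition mu :: "int \<Rightarrow> nat \<Rightarrow> int list \<Rightarrow> nat" where
  "mu T N xs = Max {n \<in> {0..N}. T dvd walk xs n}"

end

theory Submission
  imports Defs
begin

(* The event {mu_N = N - l} forces the walk to sit in T_N Z at time N - l and then to make
   no contact during the last l steps.  Splitting paths at time N - l and using that the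
   contact count is additive across a pinned splitting point gives
       P(mu_N = N - l) <= 2^l / W_T(l) <= 1 / Z(l),
   where W_T(l) is the (2^l-scaled) partition function of length l, and Z(l) is the
   normalised partition function of the homogeneous pinning model (contacts with 0 only),
   which is a lower bound because every return to 0 is a contact with T Z.
   The heart of the proof is that Z grows exponentially for delta > 0: the pinned
   partition function Zpin satisfies a renewal inequality Zpin(n) >= c sum_i Zpin(i) ret(n-i)
   with c = 1 - e^(-delta), and the return probabilities ret(2m) ~ 1/sqrt(pi m) are large
   enough that two rounds of this inequality give Zpin(a) > 1 for some a; supermultiplicativity
   then yields Z(l) >= Zpin(a)^(l div a).  Summing the geometric bound over l > l0 proves the
   theorem; the bounds are uniform in T, so no hypothesis on the sequence T_N is needed. *)


lemma finite_paths: "finite (paths n)"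
  using finite_lists_length_eq[of "{-1,1::int}" n] unfolding paths_def
  by (simp add: conj_commute numeral_2_eq_2)

lemma card_paths: "card (paths n) = 2^n"
  using card_lists_length_eq[of "{-1,1::int}" n] unfolding paths_def
  by (simp add: conj_commute numeral_2_eq_2)

lemma replicate_in_paths: "replicate n 1 \<in> paths n"
  unfolding paths_def by auto

lemma length_paths: "xs \<in> paths n \<Longrightarrow> length xs = n"
  unfolding paths_def by simp

lemma walk_0 [simp]: "walk xs 0 = 0"
  unfolding walk_def by simp

lemma walk_append_prefix: "i \<le> length xs \<Longrightarrow> walk (xs @ ys) i = walk xs i"
  unfolding walk_def by simp

lemma walk_append_suffix: "walk (xs @ ys) (length xs + j) = walk xs (length xs) + walk ys j"
  unfolding walk_def by simp

lemma sum_paths_append: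
  "(\<Sum>zs\<in>paths (a+b). f zs) = (\<Sum>xs\<in>paths a. \<Sum>ys\<in>paths b. f (xs @ ys))"
proof -
  let ?cat = "\<lambda>(xs,ys). xs @ ys"
  have img: "paths (a+b) = ?cat ` (paths a \<times> paths b)"
  proof (rule set_eqI, rule iffI)
    fix zs assume "zs \<in> paths (a+b)"
    then have "(take a zs, drop a zs) \<in> paths a \<times> paths b"
      unfolding paths_def by (auto dest: in_set_takeD in_set_dropD)
    then show "zs \<in> ?cat ` (paths a \<times> paths b)"
      by (rule rev_image_eqI) simp
  qed (auto simp: paths_def)
  have inj: "inj_on ?cat (paths a \<times> paths b)"
    by (rule inj_onI) (auto simp: length_paths)
  have "(\<Sum>zs\<in>paths (a+b). f zs) = (\<Sum>q\<in>paths a \<times> paths b. f (?cat q))"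
    unfolding img by (simp add: sum.reindex[OF inj])
  also have "\<dots> = (\<Sum>xs\<in>paths a. \<Sum>ys\<in>paths b. f (xs @ ys))"
    by (simp add: sum.cartesian_product case_prod_beta)
  finally show ?thesis .
qed


lemma visits_prefix:
  assumes "length xs = a"
  shows "visits T a (xs @ ys) = visits T a xs"
proof -
  have "{i \<in> {1..a}. T dvd walk (xs @ ys) i} = {i \<in> {1..a}. T dvd walk xs i}"
    using assms by (auto simp: walk_append_prefix)
  then show ?thesis unfolding visits_def by simp
qed

text \<open>If the prefix ends in T Z, the contacts of the suffix are exactly the contacts of the
  concatenation after time a (divisibility by T is invariant under the shift).\<close>

lemma visits_append:
  assumes "length xs = a" "T dvd walk xs a"
  shows "visits T (a+b) (xs @ ys) = visits T a xs + visits T b ys"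
proof -
  let ?A = "{i \<in> {1..a}. T dvd walk xs i}"
  let ?B = "{i \<in> {1..b}. T dvd walk ys i}"
  have "{i \<in> {1..a+b}. T dvd walk (xs@ys) i} = ?A \<union> (\<lambda>j. a + j) ` ?B"
  proof (rule set_eqI)
    fix i
    show "i \<in> {i \<in> {1..a+b}. T dvd walk (xs@ys) i} \<longleftrightarrow> i \<in> ?A \<union> (\<lambda>j. a + j) ` ?B"
    proof (cases "i \<le> a")
      case True
      then show ?thesis using assms by (auto simp: walk_append_prefix)
    next
      case False
      define j where "j = i - a"
      have j: "i = a + j" "j > 0" using False by (auto simp: j_def)
      have "walk (xs@ys) i = walk xs a + walk ys j"
        using walk_append_suffix[of xs ys j] assms j by simp
      then have "T dvd walk (xs@ys) i \<longleftrightarrow> T dvd walk ys j"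
        using assms(2) by (simp add: dvd_add_right_iff)
      then show ?thesis using j False by auto
    qed
  qed
  moreover have "?A \<inter> (\<lambda>j. a + j) ` ?B = {}" by auto
  moreover have "card ((\<lambda>j. a + j) ` ?B) = card ?B"
    by (rule card_image) (auto simp: inj_on_def)
  ultimately show ?thesis
    unfolding visits_def by (simp add: card_Un_disjoint)
qed

lemma visits_Suc:
  "visits T (Suc n) xs = visits T n xs + (if T dvd walk xs (Suc n) then 1 else 0)"
proof -
  have "{i \<in> {1..Suc n}. T dvd walk xs i}
      = {i \<in> {1..n}. T dvd walk xs i} \<union> (if T dvd walk xs (Suc n) then {Suc n} else {})"
    by (auto simp: le_Suc_eq)
  then show ?thesis unfolding visits_def by (auto simp: card_insert_if)
qed

text \<open>A return to 0 is a contact with T Z for every T.\<close>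

lemma visits_zero_le: "visits 0 k xs \<le> visits T k xs"
  unfolding visits_def by (intro card_mono) auto


text \<open>The 2^N-scaled polymer mass of an event; the polymer probability is its ratio to the
  total mass, so all estimates can be carried out on masses.\<close>

definition mass :: "int \<Rightarrow> nat \<Rightarrow> real \<Rightarrow> (int list \<Rightarrow> bool) \<Rightarrow> real" where
  "mass T N d A = (\<Sum>xs\<in>paths N. if A xs then weight T N d xs else 0)"

lemma weight_pos: "weight T N d xs > 0"
  unfolding weight_def by simp

lemma mass_nonneg: "mass T N d A \<ge> 0"
  unfolding mass_def by (intro sum_nonneg) (auto intro: less_imp_le[OF weight_pos])

lemma mass_total_pos: "mass T N d (\<lambda>_. True) > 0"
  unfolding mass_def using finite_paths replicate_in_paths
  by (auto intro!: sum_pos weight_pos)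

lemma Ppol_mass: "Ppol T N d A = mass T N d A / mass T N d (\<lambda>_. True)"
proof -
  have "(\<Sum>xs\<in>{xs\<in>paths N. A xs}. weight T N d xs / 2^N) = mass T N d A / 2^N"
    unfolding mass_def sum.inter_filter[OF finite_paths] sum_divide_distrib
    by (intro sum.cong) auto
  moreover have "Zpol T N d = mass T N d (\<lambda>_. True) / 2^N"
    unfolding mass_def Zpol_def sum_divide_distrib by simp
  ultimately show ?thesis unfolding Ppol_def by simp
qed

text \<open>For nonnegative delta every path has weight at least 1.\<close>

lemma mass_total_ge:
  assumes "d \<ge> 0"
  shows "2^k \<le> mass T k d (\<lambda>_. True)"
proof -
  have "(2::real)^k = (\<Sum>xs\<in>paths k. 1)" by (simp add: card_paths)
  also have "\<dots> \<le> mass T k d (\<lambda>_. True)"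
    unfolding mass_def weight_def using assms by (intro sum_mono) simp
  finally show ?thesis .
qed

lemma mass_total_homogeneous_le:
  "d \<ge> 0 \<Longrightarrow> mass 0 k d (\<lambda>_. True) \<le> mass T k d (\<lambda>_. True)"
  unfolding mass_def weight_def
  by (auto intro!: sum_mono mult_left_mono simp: visits_zero_le)


lemma mu_eq_iff:
  assumes "m \<le> N"
  shows "mu T N xs = m \<longleftrightarrow> T dvd walk xs m \<and> (\<forall>i. m < i \<and> i \<le> N \<longrightarrow> \<not> T dvd walk xs i)"
proof -
  have fin: "finite {n \<in> {0..N}. T dvd walk xs n}" by simp
  have ne: "{n \<in> {0..N}. T dvd walk xs n} \<noteq> {}" by force
  show ?thesis unfolding mu_def Max_eq_iff[OF fin ne] using assms
    by (auto simp: not_less) (meson leI)+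
qed

lemma mu_le: "mu T N xs \<le> N"
proof -
  have ne: "{n \<in> {0..N}. T dvd walk xs n} \<noteq> {}" by force
  show ?thesis unfolding mu_def using Max_in[OF _ ne] by auto
qed

lemma mass_last_contact_split:
  "mass T N d (\<lambda>xs. mu T N xs < N - l0) = (\<Sum>l\<in>{l0+1..N}. mass T N d (\<lambda>xs. mu T N xs = N - l))"
proof -
  have "(\<Sum>l\<in>{l0+1..N}. if mu T N xs = N - l then w else 0)
      = (if mu T N xs < N - l0 then w else 0)" for xs and w :: real
  proof -
    have "(\<Sum>l\<in>{l0+1..N}. if mu T N xs = N - l then w else 0)
        = (\<Sum>l\<in>{l0+1..N}. if l = N - mu T N xs then w else 0)"
      using mu_le[of T N xs] by (intro sum.cong refl) auto
    then show ?thesis using mu_le[of T N xs] by auto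
  qed
  then show ?thesis
    unfolding mass_def by (subst sum.swap) simp
qed

definition pinned_mass :: "int \<Rightarrow> nat \<Rightarrow> real \<Rightarrow> real" where
  "pinned_mass T a d = mass T a d (\<lambda>xs. T dvd walk xs a)"

text \<open>If the last contact before a + k is at a, the path is pinned at a and the last k steps
  carry no contact, so they contribute weight 1 each: the 2^k suffixes are counted freely.\<close>

lemma mass_last_contact_le:
  "mass T (a+k) d (\<lambda>xs. mu T (a+k) xs = a) \<le> 2^k * pinned_mass T a d"
proof -
  have "mass T (a+k) d (\<lambda>xs. mu T (a+k) xs = a)
      = (\<Sum>xs\<in>paths a. \<Sum>ys\<in>paths k.
           if mu T (a+k) (xs@ys) = a then weight T (a+k) d (xs@ys) else 0)"
    unfolding mass_def by (rule sum_paths_append)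
  also have "\<dots> \<le> (\<Sum>xs\<in>paths a. \<Sum>ys\<in>paths k. if T dvd walk xs a then weight T a d xs else 0)"
  proof (intro sum_mono)
    fix xs ys assume "xs \<in> paths a"
    then have len: "length xs = a" by (rule length_paths)
    show "(if mu T (a+k) (xs@ys) = a then weight T (a+k) d (xs@ys) else 0)
          \<le> (if T dvd walk xs a then weight T a d xs else 0)"
    proof (cases "mu T (a+k) (xs@ys) = a")
      case True
      then have pin: "T dvd walk xs a"
        and no_contact: "\<And>i. a < i \<Longrightarrow> i \<le> a+k \<Longrightarrow> \<not> T dvd walk (xs@ys) i"
        using mu_eq_iff[of a "a+k" T "xs@ys"] len walk_append_prefix[of a xs ys] by auto
      have "{i \<in> {1..k}. T dvd walk ys i} = {}"
      proof -
        have "\<not> T dvd walk ys i" if "1 \<le> i" "i \<le> k" for i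
          using no_contact[of "a+i"] that pin walk_append_suffix[of xs ys i] len
          by (auto simp: dvd_add_right_iff)
        then show ?thesis by auto
      qed
      then have "weight T (a+k) d (xs@ys) = weight T a d xs"
        unfolding weight_def visits_append[OF len pin] by (simp add: visits_def)
      then show ?thesis using True pin by simp
    qed (auto intro: less_imp_le[OF weight_pos])
  qed
  also have "\<dots> = 2^k * pinned_mass T a d"
    unfolding pinned_mass_def mass_def by (simp add: card_paths sum_distrib_left)
  finally show ?thesis .
qed

text \<open>Concatenating a pinned path with an arbitrary one only adds contacts.\<close>

lemma pinned_mass_supermult:
  "pinned_mass T a d * mass T b d (\<lambda>_. True) \<le> mass T (a+b) d (\<lambda>_. True)"
proof -
  have "pinned_mass T a d * mass T b d (\<lambda>_. True)
      = (\<Sum>xs\<in>paths a. \<Sum>ys\<in>paths b.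
           if T dvd walk xs a then weight T a d xs * weight T b d ys else 0)"
    unfolding pinned_mass_def mass_def sum_product by (intro sum.cong) auto
  also have "\<dots> \<le> (\<Sum>xs\<in>paths a. \<Sum>ys\<in>paths b. weight T (a+b) d (xs@ys))"
  proof (intro sum_mono)
    fix xs ys assume "xs \<in> paths a"
    then have len: "length xs = a" by (rule length_paths)
    show "(if T dvd walk xs a then weight T a d xs * weight T b d ys else 0)
          \<le> weight T (a+b) d (xs@ys)"
      using visits_append[OF len, of T b ys] weight_pos[of T "a+b" d "xs@ys"]
      by (auto simp: weight_def distrib_left exp_add)
  qed
  also have "\<dots> = mass T (a+b) d (\<lambda>_. True)"
    unfolding mass_def by (simp add: sum_paths_append)
  finally show ?thesis .
qed


section \<open>The homogeneous pinning model\<close>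

text \<open>Normalised partition functions of the walk rewarded at its returns to 0: the free one
  (equal to E[exp(d L_k)] for the number L_k of returns) and the one pinned at time n.\<close>

definition Zfree :: "real \<Rightarrow> nat \<Rightarrow> real" where
  "Zfree d k = mass 0 k d (\<lambda>_. True) / 2^k"

definition Zpin :: "real \<Rightarrow> nat \<Rightarrow> real" where
  "Zpin d n = pinned_mass 0 n d / 2^n"

lemma Zpin_nonneg: "Zpin d n \<ge> 0"
  unfolding Zpin_def pinned_mass_def using mass_nonneg by simp

lemma Ppol_last_contact_le:
  assumes d: "d \<ge> 0" and l: "l \<le> N"
  shows "Ppol T N d (\<lambda>xs. mu T N xs = N - l) \<le> 1 / Zfree d l"
proof -
  have N: "N = (N - l) + l" using l by simp
  let ?W = "mass T N d (\<lambda>_. True)"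
  let ?B = "mass T l d (\<lambda>_. True)"
  have W0: "?W > 0" and B0: "?B > 0" by (rule mass_total_pos)+
  have "mass T N d (\<lambda>xs. mu T N xs = N - l) * ?B \<le> 2^l * pinned_mass T (N-l) d * ?B"
    using mass_last_contact_le[of T "N-l" l d] N B0 by (intro mult_right_mono) auto
  also have "\<dots> \<le> 2^l * ?W"
    using pinned_mass_supermult[of T "N-l" d l] N by (simp add: mult.assoc)
  finally have "mass T N d (\<lambda>xs. mu T N xs = N - l) / ?W \<le> 2^l / ?B"
    using W0 B0 by (simp add: field_simps)
  also have "\<dots> \<le> 2^l / mass 0 l d (\<lambda>_. True)"
    using mass_total_homogeneous_le[OF d, of l T] mass_total_pos[of 0 l d]
    by (intro divide_left_mono) auto
  also have "\<dots> = 1 / Zfree d l" unfolding Zfree_def by simp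
  finally show ?thesis unfolding Ppol_mass .
qed

lemma Zfree_supermult: "Zpin d a * Zfree d b \<le> Zfree d (a+b)"
proof -
  have "Zpin d a * Zfree d b = pinned_mass 0 a d * mass 0 b d (\<lambda>_. True) / 2^(a+b)"
    unfolding Zpin_def Zfree_def by (simp add: power_add)
  also have "\<dots> \<le> Zfree d (a+b)" unfolding Zfree_def
    by (rule divide_right_mono[OF pinned_mass_supermult]) simp
  finally show ?thesis .
qed

text \<open>Iterating supermultiplicativity t times (Zfree >= 1 closes the induction).\<close>

lemma Zfree_power_lower: "d \<ge> 0 \<Longrightarrow> Zpin d a ^ t \<le> Zfree d (t*a + r)"
proof (induction t)
  case 0
  then show ?case using mass_total_ge[of d r 0] by (simp add: Zfree_def)
next
  case (Suc t)
  have "Zpin d a ^ Suc t \<le> Zpin d a * Zfree d (t*a + r)"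
    using Suc Zpin_nonneg by (simp add: mult_left_mono)
  also have "\<dots> \<le> Zfree d (a + (t*a + r))" by (rule Zfree_supermult)
  finally show ?case by (simp add: add.assoc)
qed


section \<open>The renewal inequality\<close>

text \<open>Telescoping exp(d L_n) over the return times with c = 1 - e^(-d):
  each return at time i raises exp(d L) from exp(d (L_i - 1)) to exp(d L_i).\<close>

lemma exp_visits_renewal:
  fixes d :: real
  shows "exp (d * visits 0 n xs)
    = 1 + (1 - exp (-d)) * (\<Sum>i\<in>{1..n}. if walk xs i = 0 then exp (d * visits 0 i xs) else 0)"
proof (induction n)
  case 0
  then show ?case by (simp add: visits_def)
next
  case (Suc n)
  have s: "{1..Suc n} = insert (Suc n) {1..n}" by auto
  show ?case
  proof (cases "walk xs (Suc n) = 0")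
    case True
    have "exp (d * visits 0 (Suc n) xs)
        = exp (d * visits 0 n xs) + (1 - exp (-d)) * exp (d * visits 0 (Suc n) xs)"
      using True by (simp add: visits_Suc algebra_simps exp_add[symmetric] exp_diff[symmetric])
    then show ?thesis using Suc True unfolding s by (simp add: algebra_simps)
  next
    case False
    then show ?thesis using Suc unfolding s by (simp add: visits_Suc)
  qed
qed

definition ret :: "nat \<Rightarrow> real" where
  "ret n = card {zs \<in> paths n. walk zs n = 0} / 2^n"

lemma ret_nonneg: "ret n \<ge> 0"
  unfolding ret_def by simp

lemma ret_sum: "ret n = (\<Sum>zs\<in>paths n. if walk zs n = 0 then 1 else 0) / 2^n"
  unfolding ret_def by (simp add: sum.If_cases[OF finite_paths] Int_def conj_commute)

lemma Zpin_ge_ret: "d \<ge> 0 \<Longrightarrow> ret n \<le> Zpin d n"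
  unfolding Zpin_def pinned_mass_def mass_def ret_sum weight_def
  by (intro divide_right_mono sum_mono) auto

lemma pinned_mass_times_ret:
  fixes d :: real
  shows "(\<Sum>xs\<in>paths (i+j). if walk xs (i+j) = 0 \<and> walk xs i = 0 then exp (d * visits 0 i xs) else 0)
    = pinned_mass 0 i d * (\<Sum>zs\<in>paths j. if walk zs j = 0 then 1 else 0)"
proof -
  have "(\<Sum>xs\<in>paths (i+j). if walk xs (i+j) = 0 \<and> walk xs i = 0 then exp (d * visits 0 i xs) else 0)
     = (\<Sum>ys\<in>paths i. \<Sum>zs\<in>paths j. if walk (ys@zs) (i+j) = 0 \<and> walk (ys@zs) i = 0
                                        then exp (d * visits 0 i (ys@zs)) else 0)"
    by (rule sum_paths_append)
  also have "\<dots> = (\<Sum>ys\<in>paths i. \<Sum>zs\<in>paths j.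
      (if walk ys i = 0 then exp (d * visits 0 i ys) else 0) * (if walk zs j = 0 then 1 else 0))"
  proof (intro sum.cong refl)
    fix ys zs assume "ys \<in> paths i"
    then have len: "length ys = i" by (rule length_paths)
    then show "(if walk (ys@zs) (i+j) = 0 \<and> walk (ys@zs) i = 0 then exp (d * visits 0 i (ys@zs)) else 0)
        = (if walk ys i = 0 then exp (d * visits 0 i ys) else 0) * (if walk zs j = 0 then 1 else 0)"
      using walk_append_prefix[of i ys zs] walk_append_suffix[of ys zs j] visits_prefix[OF len]
      by auto
  qed
  also have "\<dots> = pinned_mass 0 i d * (\<Sum>zs\<in>paths j. if walk zs j = 0 then 1 else 0)"
    unfolding pinned_mass_def mass_def sum_product weight_def by simp
  finally show ?thesis .
qed

lemma Zpin_renewal: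
  assumes "d \<ge> 0"
  shows "(1 - exp (-d)) * (\<Sum>i\<in>{1..n}. Zpin d i * ret (n - i)) \<le> Zpin d n"
proof -
  let ?c = "1 - exp (-d)"
  let ?F = "\<lambda>i xs. if walk xs n = 0 \<and> walk xs i = 0 then exp (d * visits 0 i xs) else (0::real)"
  have summand: "Zpin d i * ret (n - i) = (\<Sum>xs\<in>paths n. ?F i xs) / 2^n" if "i \<in> {1..n}" for i
  proof -
    have n: "n = i + (n - i)" using that by simp
    have "(\<Sum>xs\<in>paths n. ?F i xs)
        = pinned_mass 0 i d * (\<Sum>zs\<in>paths (n-i). if walk zs (n-i) = 0 then 1 else 0)"
      using pinned_mass_times_ret[of i "n - i" d] n by simp
    then show ?thesis
      using that by (simp add: Zpin_def ret_sum power_diff)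
  qed
  have sums: "(\<Sum>i\<in>{1..n}. Zpin d i * ret (n - i)) = (\<Sum>i\<in>{1..n}. \<Sum>xs\<in>paths n. ?F i xs) / 2^n"
    unfolding sum_divide_distrib by (rule sum.cong[OF refl]) (simp add: summand sum_divide_distrib)
  have "?c * (\<Sum>i\<in>{1..n}. \<Sum>xs\<in>paths n. ?F i xs) = (\<Sum>xs\<in>paths n. ?c * (\<Sum>i\<in>{1..n}. ?F i xs))"
    by (simp add: sum_distrib_left sum.swap[of _ "paths n"])
  also have "\<dots> \<le> (\<Sum>xs\<in>paths n. if walk xs n = 0 then exp (d * visits 0 n xs) else 0)"
    using assms by (intro sum_mono) (auto simp: exp_visits_renewal[of d n] intro!: sum.cong)
  also have "\<dots> = pinned_mass 0 n d"
    unfolding pinned_mass_def mass_def weight_def by simp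
  finally have "?c * (\<Sum>i\<in>{1..n}. \<Sum>xs\<in>paths n. ?F i xs) / 2^n \<le> Zpin d n"
    unfolding Zpin_def by (simp add: divide_right_mono)
  then show ?thesis by (simp only: sums times_divide_eq_right)
qed

lemma Zpin_renewal_even:
  assumes d: "d \<ge> 0" and A: "A \<subseteq> {1..b}"
  shows "(1 - exp (-d)) * (\<Sum>a\<in>A. Zpin d (2*a) * ret (2*(b-a))) \<le> Zpin d (2*b)"
proof -
  have "(\<Sum>a\<in>A. Zpin d (2*a) * ret (2*(b-a))) = (\<Sum>i\<in>(\<lambda>a. 2*a) ` A. Zpin d i * ret (2*b - i))"
    by (subst sum.reindex) (auto simp: inj_on_def diff_mult_distrib2)
  also have "\<dots> \<le> (\<Sum>i\<in>{1..2*b}. Zpin d i * ret (2*b - i))"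
    using A by (intro sum_mono2) (auto intro: mult_nonneg_nonneg Zpin_nonneg ret_nonneg)
  finally have "(1 - exp (-d)) * (\<Sum>a\<in>A. Zpin d (2*a) * ret (2*(b-a)))
      \<le> (1 - exp (-d)) * (\<Sum>i\<in>{1..2*b}. Zpin d i * ret (2*b - i))"
    using d by (intro mult_left_mono) auto
  also have "\<dots> \<le> Zpin d (2*b)" by (rule Zpin_renewal[OF d])
  finally show ?thesis .
qed

lemma Zpin_convolution_lower:
  fixes x s :: real
  assumes d: "d \<ge> 0" and A: "A \<subseteq> {1..b}" and x: "x \<ge> 0" and s: "s \<ge> 0"
    and Zx: "\<And>a. a \<in> A \<Longrightarrow> x \<le> Zpin d (2*a)"
    and rs: "\<And>a. a \<in> A \<Longrightarrow> s \<le> ret (2*(b-a))"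
  shows "(1 - exp (-d)) * (card A * (x * s)) \<le> Zpin d (2*b)"
proof -
  have "card A * (x * s) = (\<Sum>a\<in>A. x * s)" by simp
  also have "\<dots> \<le> (\<Sum>a\<in>A. Zpin d (2*a) * ret (2*(b-a)))"
    using Zx rs x s by (intro sum_mono mult_mono) (auto intro: Zpin_nonneg)
  finally have "(1 - exp (-d)) * (card A * (x * s))
      \<le> (1 - exp (-d)) * (\<Sum>a\<in>A. Zpin d (2*a) * ret (2*(b-a)))"
    using d by (intro mult_left_mono) auto
  also have "\<dots> \<le> Zpin d (2*b)" by (rule Zpin_renewal_even[OF d A])
  finally show ?thesis .
qed


section \<open>Return probabilities\<close>

lemma sum_list_in_paths:
  assumes "xs \<in> paths n"
  shows "sum_list xs = 2 * int (card {i\<in>{0..<n}. xs!i = 1}) - int n"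
proof -
  have len: "length xs = n" and set: "set xs \<subseteq> {-1,1}" using assms by (auto simp: paths_def)
  have "sum_list xs = (\<Sum>i\<in>{0..<n}. 2 * (if xs!i = 1 then 1 else 0) - 1)"
    unfolding sum_list_sum_nth len
  proof (intro sum.cong refl)
    fix i assume "i \<in> {0..<n}"
    then have "xs!i \<in> {-1,1}" using set len by (auto dest!: nth_mem)
    then show "xs!i = 2 * (if xs!i = 1 then 1 else 0) - 1" by auto
  qed
  also have "\<dots> = 2 * int (card {i\<in>{0..<n}. xs!i = 1}) - int n"
    by (simp add: sum_subtractf sum_distrib_left[symmetric] sum.If_cases Int_def)
  finally show ?thesis .
qed

text \<open>Paths of length 2m ending at 0 correspond to the m-subsets of the up-steps.\<close>

lemma card_returning_paths: "card {zs \<in> paths (2*m). walk zs (2*m) = 0} = (2*m) choose m"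
proof -
  let ?n = "2*m"
  let ?X = "{zs \<in> paths ?n. walk zs ?n = 0}"
  let ?Y = "{S. S \<subseteq> {0..<?n} \<and> card S = m}"
  let ?f = "\<lambda>xs. {i\<in>{0..<?n}. xs!i = (1::int)}"
  let ?g = "\<lambda>S. map (\<lambda>i. if i \<in> S then 1 else (-1::int)) [0..<?n]"
  have walk_end: "xs \<in> paths ?n \<Longrightarrow> walk xs ?n = sum_list xs" for xs
    by (simp add: walk_def paths_def)
  have g_paths: "?g S \<in> paths ?n" for S unfolding paths_def by auto
  have fg: "S \<subseteq> {0..<?n} \<Longrightarrow> ?f (?g S) = S" for S by (auto split: if_splits)
  have gf: "?g (?f xs) = xs" if xs: "xs \<in> paths ?n" for xs
  proof (rule nth_equalityI)
    show "length (?g (?f xs)) = length xs" using xs by (simp add: length_paths)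
    fix i assume "i < length (?g (?f xs))"
    then have i: "i < ?n" by simp
    then have "xs!i \<in> set xs" using xs by (simp add: length_paths)
    then have "xs!i \<in> {-1,1}" using xs by (auto simp: paths_def)
    then show "?g (?f xs) ! i = xs ! i" using i by auto
  qed
  have "bij_betw ?f ?X ?Y"
  proof (rule bij_betw_byWitness[where f'="?g"])
    show "?f ` ?X \<subseteq> ?Y"
    proof
      fix S assume "S \<in> ?f ` ?X"
      then obtain xs where xs: "xs \<in> ?X" and S: "S = ?f xs" by blast
      have "sum_list xs = 0" using xs walk_end by auto
      then have "2 * int (card S) - int ?n = 0" using sum_list_in_paths[of xs ?n] xs S by simp
      then show "S \<in> ?Y" using S by auto
    qed
    show "?g ` ?Y \<subseteq> ?X"
    proof
      fix xs assume "xs \<in> ?g ` ?Y"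
      then obtain S where S: "S \<in> ?Y" and xs: "xs = ?g S" by blast
      then have "sum_list xs = 0" using sum_list_in_paths[OF g_paths[of S]] fg[of S] by simp
      then show "xs \<in> ?X" using xs g_paths walk_end by auto
    qed
  qed (use fg gf in auto)
  then have "card ?X = card ?Y" by (rule bij_betw_same_card)
  also have "\<dots> = ?n choose m" using n_subsets[of "{0..<?n}" m] by simp
  finally show ?thesis .
qed

text \<open>(m+1) C(2m+2,m+1) = 2 (2m+1) C(2m,m), from the absorption identity and the symmetry
  C(2m+1,m+1) = C(2m+1,m).\<close>

lemma central_binomial_rec:
  "Suc m * (2 * Suc m choose Suc m) = 2 * Suc (2*m) * (2*m choose m)"
proof -
  have sym: "Suc (2*m) choose Suc m = Suc (2*m) choose m"
    using Suc_times_binomial_add[of m m] unfolding mult_2 by (simp only: mult_cancel1) simp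
  have "Suc m * (Suc m * (Suc (Suc (2*m)) choose Suc m))
      = Suc m * (Suc (Suc (2*m)) * (Suc (2*m) choose m))"
    by (simp only: Suc_times_binomial)
  also have "\<dots> = 2 * Suc m * (Suc m * (Suc (2*m) choose Suc m))"
    by (simp add: sym del: binomial_Suc_Suc)
  also have "\<dots> = Suc m * (2 * Suc (2*m) * (2*m choose m))"
    by (simp only: Suc_times_binomial)
  finally have "Suc m * (Suc (Suc (2*m)) choose Suc m) = 2 * Suc (2*m) * (2*m choose m)"
    by (simp only: mult_cancel1) simp
  moreover have "2 * Suc m = Suc (Suc (2*m))" by simp
  ultimately show ?thesis by (simp only:)
qed

text \<open>The sharp-order lower bound C(2m,m)^2 >= 16^m / (4m), proved by induction from the
  ratio (2m+1)^2 / (m+1)^2 >= 4m / (m+1) of consecutive terms.\<close>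

lemma central_binomial_sq_lower: "m \<ge> 1 \<Longrightarrow> 16^m \<le> 4 * real m * (real ((2*m) choose m))^2"
proof (induction m rule: dec_induct)
  case base
  then show ?case by simp
next
  case (step m)
  define C where "C = real ((2*m) choose m)"
  define D where "D = real ((2 * Suc m) choose Suc m)"
  have "real (Suc m * (2 * Suc m choose Suc m)) = real (2 * Suc (2*m) * (2*m choose m))"
    by (simp only: central_binomial_rec)
  then have D_rec: "(real m + 1) * D = 2 * (2*real m+1) * C"
    unfolding C_def D_def by (simp del: binomial_Suc_Suc add: algebra_simps)
  have "(real m + 1) * (16 * (4 * m * C^2)) = 16 * (4*m*(m+1)) * C^2"
    by (simp add: algebra_simps)
  also have "\<dots> \<le> 16 * (2*m+1)^2 * C^2"
    by (intro mult_right_mono mult_left_mono) (auto simp: power2_eq_square algebra_simps)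
  also have "\<dots> = 4 * ((real m + 1) * D)^2"
    unfolding D_rec by (simp add: power2_eq_square algebra_simps)
  also have "\<dots> = (real m + 1) * (4 * real (Suc m) * D^2)"
    by (simp add: power2_eq_square algebra_simps)
  finally have "16 * (4 * m * C^2) \<le> 4 * real (Suc m) * D^2"
    by (rule mult_left_le_imp_le) simp
  moreover have "16 * 16^m \<le> 16 * (4 * m * C^2)" using step by (simp add: C_def)
  ultimately show ?case unfolding D_def by simp
qed

lemma ret_lower:
  assumes "1 \<le> g" "g \<le> 2*m"
  shows "1 / (2 * sqrt (2*real m)) \<le> ret (2*g)"
proof -
  have "((2::real)^(2*g))^2 = 16^g"
    by (simp add: power_mult[symmetric] mult.commute[of 2 g]) (simp add: power_mult)
  then have "(ret (2*g))^2 = (real ((2*g) choose g))^2 / 16^g"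
    unfolding ret_def card_returning_paths power_divide by simp
  also have "\<dots> \<ge> 1 / (4 * real g)"
    using central_binomial_sq_lower[of g] assms by (simp add: field_simps)
  finally have "1 / (4 * real g) \<le> (ret (2*g))^2" .
  moreover have "(1 / (2 * sqrt (2*real m)))^2 = 1 / (8 * real m)"
    by (simp add: power_divide power_mult_distrib)
  moreover have "1 / (8 * real m) \<le> 1 / (4 * real g)"
    using assms by (simp add: frac_le)
  ultimately have "(1 / (2 * sqrt (2*real m)))^2 \<le> (ret (2*g))^2" by linarith
  then show ?thesis by (rule power2_le_imp_le) (rule ret_nonneg)
qed


section \<open>Exponential growth of the homogeneous partition function\<close>

text \<open>Two rounds of the renewal inequality with m ~ 512 / c^4 summands each push the pinned
  partition function above 1: with s = 1/(2 sqrt(2m)) one gets Zpin >= c m s^2 at all times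
  2b, m < b <= 2m, and then Zpin(4m+2) >= c^2 m^2 s^3, whose square is c^4 m / 512 > 1.\<close>

lemma Zpin_exceeds_one:
  assumes d: "d > 0"
  shows "\<exists>a>0. Zpin d a > 1"
proof -
  define c where "c = 1 - exp (-d)"
  have c: "c > 0" "c \<le> 1" using d by (auto simp: c_def)
  define m :: nat where "m = nat \<lceil>512 / c^4\<rceil> + 1"
  have m1: "m \<ge> 1" by (simp add: m_def)
  have m_big: "512 / c^4 < real m" unfolding m_def by linarith
  define s where "s = 1 / (2 * sqrt (2*real m))"
  have s0: "s \<ge> 0" by (simp add: s_def)
  have ret_s: "\<And>g. 1 \<le> g \<Longrightarrow> g \<le> 2*m \<Longrightarrow> s \<le> ret (2*g)"
    unfolding s_def by (rule ret_lower)
  define x where "x = c * (m * (s * s))"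
  have x0: "x \<ge> 0" using c s0 by (simp add: x_def)
  have first_round: "x \<le> Zpin d (2*b)" if b: "b \<in> {m+1..2*m}" for b
  proof -
    have Zs: "s \<le> Zpin d (2*a)" if "a \<in> {1..m}" for a
      using ret_s[of a] Zpin_ge_ret[of d "2*a"] that d by auto
    have rs: "s \<le> ret (2*(b-a))" if "a \<in> {1..m}" for a
      using ret_s[of "b-a"] that b by auto
    have "(1 - exp (-d)) * (card {1..m} * (s * s)) \<le> Zpin d (2*b)"
      by (rule Zpin_convolution_lower[OF _ _ s0 s0 Zs rs]) (use d b in auto)
    then show ?thesis unfolding x_def c_def by simp
  qed
  define j where "j = 2*m+1"
  have rs: "s \<le> ret (2*(j-b))" if "b \<in> {m+1..2*m}" for b
    using ret_s[of "j-b"] that by (auto simp: j_def)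
  have "(1 - exp (-d)) * (card {m+1..2*m} * (x * s)) \<le> Zpin d (2*j)"
    by (rule Zpin_convolution_lower[OF _ _ x0 s0 first_round rs]) (use d in \<open>auto simp: j_def\<close>)
  then have "c * (m * (x * s)) \<le> Zpin d (2*j)"
    unfolding c_def by simp
  moreover have "1 < c * (m * (x * s))"
  proof -
    have s2: "s^2 = 1 / (8 * m)" unfolding s_def using m1 by (simp add: power_divide power_mult_distrib)
    have "(c * (m * (x * s)))^2 = c^4 * (real m)^4 * (s^2)^3"
      unfolding x_def by (simp add: power2_eq_square power3_eq_cube power4_eq_xxxx algebra_simps)
    also have "\<dots> = c^4 * real m / 512"
      unfolding s2 using m1 by (simp add: field_simps power3_eq_cube power4_eq_xxxx)
    also have "\<dots> > 1" using m_big c by (simp add: field_simps)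
    finally have "1^2 < (c * (m * (x * s)))^2" by simp
    moreover have "0 \<le> c * (m * (x * s))" using c x0 s0 by simp
    ultimately show ?thesis by (rule power_less_imp_less_base)
  qed
  ultimately have "1 < Zpin d (2*j)" by linarith
  then show ?thesis by (intro exI[of _ "2*j"]) (simp add: j_def)
qed

text \<open>Converts the block bound rho^(l div a) into a genuine geometric bound in l.\<close>

lemma inverse_power_div_le:
  fixes \<rho> :: real
  assumes r: "\<rho> > 1" and a: "a > 0"
  shows "1 / \<rho>^(l div a) \<le> \<rho> * (\<rho> powr (-1/a))^l"
proof -
  have "l < (l div a + 1) * a"
  proof -
    have "l = l div a * a + l mod a" by simp
    also have "\<dots> < l div a * a + a" by (rule add_strict_left_mono) (rule mod_less_divisor[OF a])
    finally show ?thesis by (simp add: algebra_simps)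
  qed
  then have "real l < (real (l div a) + 1) * real a" by (metis of_nat_1 of_nat_add of_nat_less_iff of_nat_mult)
  then have "real l / real a - 1 \<le> real (l div a)" using a by (simp add: field_simps)
  then have "\<rho> powr (real l / real a - 1) \<le> \<rho> powr (real (l div a))"
    using r by (intro powr_mono) auto
  also have "\<dots> = \<rho>^(l div a)" using r by (simp add: powr_realpow)
  finally have lower: "\<rho> powr (real l / real a - 1) \<le> \<rho>^(l div a)" .
  have "\<rho> * (\<rho> powr (-1/a))^l = \<rho> powr 1 * \<rho> powr (real l * (-1/a))"
    using r by (simp add: powr_power)
  also have "\<dots> = \<rho> powr (1 + real l * (-1/a))" by (simp only: powr_add[symmetric])
  also have "\<dots> = \<rho> powr (1 - real l / real a)" by simp
  also have "\<dots> = 1 / \<rho> powr (real l / real a - 1)"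
    by (simp add: powr_minus_divide[symmetric])
  finally show ?thesis using lower r by (simp add: frac_le)
qed

lemma Zfree_inverse_geometric:
  assumes d: "d > 0"
  shows "\<exists>C r. 0 < r \<and> r < 1 \<and> (\<forall>l. 1 / Zfree d l \<le> C * r^l)"
proof -
  obtain a where a: "a > 0" "Zpin d a > 1" using Zpin_exceeds_one[OF d] by blast
  define \<rho> where "\<rho> = Zpin d a"
  have rho: "\<rho> > 1" using a by (simp add: \<rho>_def)
  have "1 / Zfree d l \<le> \<rho> * (\<rho> powr (-1/a))^l" for l
  proof -
    have "\<rho>^(l div a) \<le> Zfree d l"
      using Zfree_power_lower[of d a "l div a" "l mod a"] d unfolding \<rho>_def by simp
    moreover have "0 < \<rho>^(l div a)" using rho by simp
    ultimately have "1 / Zfree d l \<le> 1 / \<rho>^(l div a)"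
      by (intro divide_left_mono) auto
    then show ?thesis using inverse_power_div_le[OF rho a(1), of l] by linarith
  qed
  moreover have "0 < \<rho> powr (-1/a)" "\<rho> powr (-1/a) < 1"
    using rho a by (auto intro: powr_less_one)
  ultimately show ?thesis by blast
qed


lemma geometric_tail_small:
  fixes C r \<epsilon> :: real
  assumes r: "0 < r" "r < 1" and \<epsilon>: "\<epsilon> > 0"
  shows "\<exists>n::nat. \<forall>N. (\<Sum>l\<in>{n+1..N}. C * r^l) \<le> \<epsilon>"
proof -
  define K where "K = \<bar>C\<bar> + 1"
  have K: "K > 0" by (simp add: K_def)
  obtain n where n: "r^n < \<epsilon> * (1 - r) / K"
    using real_arch_pow_inv[of "\<epsilon> * (1 - r) / K" r] r \<epsilon> K by auto
  have "(\<Sum>l\<in>{n+1..N}. C * r^l) \<le> \<epsilon>" for N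
  proof -
    have "(\<Sum>l\<in>{n+1..N}. r^l) \<le> r^(n+1) / (1 - r)"
      unfolding sum_gp using r by (auto simp: divide_right_mono)
    also have "\<dots> \<le> r^n / (1 - r)"
      using r by (intro divide_right_mono) (auto simp: mult_left_le_one_le)
    finally have geo: "(\<Sum>l\<in>{n+1..N}. r^l) \<le> r^n / (1 - r)" .
    have "(\<Sum>l\<in>{n+1..N}. C * r^l) \<le> (\<Sum>l\<in>{n+1..N}. K * r^l)"
      using r by (intro sum_mono mult_right_mono) (auto simp: K_def)
    also have "\<dots> \<le> K * (r^n / (1 - r))"
      unfolding sum_distrib_left[symmetric] using geo K by (intro mult_left_mono) auto
    also have "\<dots> \<le> \<epsilon>" using n r K by (simp add: field_simps)
    finally show ?thesis .
  qed
  then show ?thesis by blast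
qed

theorem mainTheorem17:
  fixes \<delta> :: real and T :: "nat \<Rightarrow> int"
  assumes "\<delta> > 0"
    and "\<And>N. T N > 0 \<and> even (T N)"
  shows "\<forall>\<epsilon>>0. \<exists>l0::nat. \<forall>N::nat.
           Ppol (T N) N \<delta> (\<lambda>xs. mu (T N) N xs < N - l0)
             = (\<Sum>l\<in>{l0+1..N}. Ppol (T N) N \<delta> (\<lambda>xs. mu (T N) N xs = N - l))
         \<and> Ppol (T N) N \<delta> (\<lambda>xs. mu (T N) N xs < N - l0) \<le> \<epsilon>"
proof (intro allI impI)
  fix \<epsilon> :: real assume "\<epsilon> > 0"
  obtain C r where r: "0 < r" "r < 1" and Zfree: "\<And>l. 1 / Zfree \<delta> l \<le> C * r^l"
    using Zfree_inverse_geometric[OF assms(1)] by blast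
  obtain l0 where tail: "\<And>N. (\<Sum>l\<in>{l0+1..N}. C * r^l) \<le> \<epsilon>"
    using geometric_tail_small[OF r \<open>\<epsilon> > 0\<close>] by blast
  have split: "Ppol (T N) N \<delta> (\<lambda>xs. mu (T N) N xs < N - l0)
      = (\<Sum>l\<in>{l0+1..N}. Ppol (T N) N \<delta> (\<lambda>xs. mu (T N) N xs = N - l))" for N
    unfolding Ppol_mass mass_last_contact_split sum_divide_distrib ..
  have term_bound: "Ppol (T N) N \<delta> (\<lambda>xs. mu (T N) N xs = N - l) \<le> C * r^l"
    if "l \<in> {l0+1..N}" for N l
    by (rule order_trans[OF Ppol_last_contact_le Zfree]) (use assms(1) that in auto)
  show "\<exists>l0::nat. \<forall>N::nat.
           Ppol (T N) N \<delta> (\<lambda>xs. mu (T N) N xs < N - l0)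
             = (\<Sum>l\<in>{l0+1..N}. Ppol (T N) N \<delta> (\<lambda>xs. mu (T N) N xs = N - l))
         \<and> Ppol (T N) N \<delta> (\<lambda>xs. mu (T N) N xs < N - l0) \<le> \<epsilon>"
  proof (intro exI[of _ l0] allI conjI)
    fix N
    show "Ppol (T N) N \<delta> (\<lambda>xs. mu (T N) N xs < N - l0) \<le> \<epsilon>"
      unfolding split by (rule order_trans[OF sum_mono[OF term_bound] tail])
  qed (rule split)
qed

end
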